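(* Let $H=(E,\{X_i:i\in[n]\})$ be a multi-hypergraph and let $t_1,\dots,t_n$ be integers with $0\le t_i\le|X_i|$. Let $\rho=\sum_{i=1}^n r_{M_i}$ where $M_i=U_{t_i,X_i}\oplus U_{0,E-X_i}$. For a positive integer $k$, define a map $\phi$ on the set of proper $k$-colorings $c:[n]\to[k]$ of the line graph $G_H$ by $\phi(c)=(N_1,\dots,N_k)$, where for each $i\in[k]$ $$N_i=\Bigl(\bigoplus_{h\,:\,c(h)=i}U_{t_h,X_h}\Bigr)\oplus U_{0,Y},\qquad Y=E-\bigcup_{h\,:\,c(h)=i}X_h.$$ Then $\phi(c)\in\Delta_\rho^k$ for every such coloring $c$. Consequently $\chi(\rho)\le\chi(G_H)$. If moreover $H$ is a hypergraph and, for all $i\in[n]$, either $t_i=1$ or $0<t_i<|X_i|$, then $\phi$ is injective.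
   Context: A polymatroid on a finite set $E$ is a function $\rho:2^E\to\mathbb{Z}$ that is normalized, non-decreasing and submodular. A multi-hypergraph is a pair $H=(E,\mathcal{E})$ with $E$ finite and $\mathcal{E}=\{X_i:i\in[n]\}$ a finite multiset of subsets of $E$; it is a hypergraph if $\mathcal{E}$ is a set of nonempty subsets. The line graph $G_H$ has vertex set $[n]=\{1,\dots,n\}$, with $ij$ an edge iff $i\ne j$ and $X_i\cap X_j\ne\emptyset$. $U_{r,X}$ denotes the rank-$r$ uniform matroid on $X$. For a polymatroid $\rho$ on $E$ and positive integer $k$, $\Delta_\rho^k$ is the set of $k$-tuples $(N_1,\dots,N_k)$ of matroids on $E$ with $\rho=r_{N_1}+\cdots+r_{N_k}$. The chromatic number $\chi(\rho)$ of $\rho$ is the least positive integer $k$ with $\Delta_\rho^k\ne\emptyset$ ($\infty$ if none). *)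

theory Defs
  imports Main "HOL-Library.FuncSet" "HOL-Library.Extended_Nat"
begin

text \<open>A matroid is represented as a pair (ground set, family of independent sets).\<close>
type_synonym 'a matroid = "'a set \<times> 'a set set"

definition matroid_on :: "'a set \<Rightarrow> 'a matroid \<Rightarrow> bool" where
  "matroid_on E M \<longleftrightarrow> fst M = E \<and> finite E \<and> snd M \<subseteq> Pow E \<and> {} \<in> snd M
     \<and> (\<forall>I J. J \<in> snd M \<longrightarrow> I \<subseteq> J \<longrightarrow> I \<in> snd M)
     \<and> (\<forall>I J. I \<in> snd M \<longrightarrow> J \<in> snd M \<longrightarrow> card I < card J \<longrightarrow>
            (\<exists>x \<in> J - I. insert x I \<in> snd M))"

definition mrank :: "'a matroid \<Rightarrow> 'a set \<Rightarrow> nat" where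
  "mrank M A = Max (card ` {J. J \<subseteq> A \<and> J \<in> snd M})"

definition uniform :: "nat \<Rightarrow> 'a set \<Rightarrow> 'a matroid" where
  "uniform r X = (X, {I. I \<subseteq> X \<and> card I \<le> r})"

definition dsum2 :: "'a matroid \<Rightarrow> 'a matroid \<Rightarrow> 'a matroid" where
  "dsum2 M1 M2 = (fst M1 \<union> fst M2,
     {I. I \<subseteq> fst M1 \<union> fst M2 \<and> I \<inter> fst M1 \<in> snd M1 \<and> I \<inter> fst M2 \<in> snd M2})"

definition dsum :: "'i set \<Rightarrow> ('i \<Rightarrow> 'a matroid) \<Rightarrow> 'a matroid" where
  "dsum S M = ((\<Union>s\<in>S. fst (M s)),
     {I. I \<subseteq> (\<Union>s\<in>S. fst (M s)) \<and> (\<forall>s\<in>S. I \<inter> fst (M s) \<in> snd (M s))})"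

definition multi_hypergraph :: "'a set \<Rightarrow> nat \<Rightarrow> (nat \<Rightarrow> 'a set) \<Rightarrow> bool" where
  "multi_hypergraph E n X \<longleftrightarrow> finite E \<and> (\<forall>i\<in>{1..n}. X i \<subseteq> E)"

definition hypergraph :: "'a set \<Rightarrow> nat \<Rightarrow> (nat \<Rightarrow> 'a set) \<Rightarrow> bool" where
  "hypergraph E n X \<longleftrightarrow> multi_hypergraph E n X \<and> inj_on X {1..n} \<and> (\<forall>i\<in>{1..n}. X i \<noteq> {})"

definition line_adj :: "(nat \<Rightarrow> 'a set) \<Rightarrow> nat \<Rightarrow> nat \<Rightarrow> bool" where
  "line_adj X i j \<longleftrightarrow> i \<noteq> j \<and> X i \<inter> X j \<noteq> {}"

definition proper_colorings :: "nat \<Rightarrow> (nat \<Rightarrow> 'a set) \<Rightarrow> nat \<Rightarrow> (nat \<Rightarrow> nat) set" where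
  "proper_colorings n X k = {c \<in> {1..n} \<rightarrow>\<^sub>E {1..k}.
      \<forall>i\<in>{1..n}. \<forall>j\<in>{1..n}. line_adj X i j \<longrightarrow> c i \<noteq> c j}"

definition chi_line :: "nat \<Rightarrow> (nat \<Rightarrow> 'a set) \<Rightarrow> nat" where
  "chi_line n X = (LEAST k. k \<ge> 1 \<and> proper_colorings n X k \<noteq> {})"

definition Delta :: "'a set \<Rightarrow> ('a set \<Rightarrow> int) \<Rightarrow> nat \<Rightarrow> (nat \<Rightarrow> 'a matroid) set" where
  "Delta E \<rho> k = {N \<in> {1..k} \<rightarrow>\<^sub>E UNIV. (\<forall>i\<in>{1..k}. matroid_on E (N i)) \<and>
      (\<forall>A. A \<subseteq> E \<longrightarrow> \<rho> A = (\<Sum>i=1..k. int (mrank (N i) A)))}"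

definition chi_poly :: "'a set \<Rightarrow> ('a set \<Rightarrow> int) \<Rightarrow> enat" where
  "chi_poly E \<rho> = (if \<exists>k\<ge>1. Delta E \<rho> k \<noteq> {}
      then enat (LEAST k. k \<ge> 1 \<and> Delta E \<rho> k \<noteq> {}) else \<infinity>)"

definition rho_H :: "'a set \<Rightarrow> nat \<Rightarrow> (nat \<Rightarrow> 'a set) \<Rightarrow> (nat \<Rightarrow> nat) \<Rightarrow> 'a set \<Rightarrow> int" where
  "rho_H E n X t A = (\<Sum>i=1..n. int (mrank (dsum2 (uniform (t i) (X i)) (uniform 0 (E - X i))) A))"

definition phi :: "'a set \<Rightarrow> nat \<Rightarrow> (nat \<Rightarrow> 'a set) \<Rightarrow> (nat \<Rightarrow> nat) \<Rightarrow> nat \<Rightarrow> (nat \<Rightarrow> nat) \<Rightarrow> (nat \<Rightarrow> 'a matroid)" where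
  "phi E n X t k c = (\<lambda>i\<in>{1..k}.
      dsum2 (dsum {h\<in>{1..n}. c h = i} (\<lambda>h. uniform (t h) (X h)))
            (uniform 0 (E - (\<Union>h\<in>{h\<in>{1..n}. c h = i}. X h))))"

end

theory Submission
  imports Defs "HOL-Library.Disjoint_Sets"
begin

text \<open>The edges of one colour class of a proper colouring of the line graph are pairwise
  disjoint, so the direct sum of the uniform matroids on them, padded by loops, is the
  partition-type matroid whose independent sets meet each edge \<open>X\<^sub>h\<close> in at most
  \<open>t\<^sub>h\<close> elements. Its rank is \<open>\<Sum>\<^sub>h min(t\<^sub>h, |A \<inter> X\<^sub>h|)\<close>, so summing over the
  colours merely regroups the sum defining \<open>\<rho>\<close>; this gives \<open>\<phi>(c) \<in> \<Delta>\<close>, and a colouring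
  with \<open>\<chi>(G\<^sub>H)\<close> colours bounds \<open>\<chi>(\<rho>)\<close>.

  For injectivity, the independent sets of such a matroid determine its blocks when
  \<open>t\<^sub>h = 1\<close> or \<open>0 < t\<^sub>h < |X\<^sub>h|\<close>: two elements \<open>x, y\<close> of one block admit an independent
  \<open>I\<close> with \<open>I + x\<close> and \<open>I + y\<close> independent but \<open>I + x + y\<close> dependent, which never happens
  for elements of different blocks. Hence every edge of colour \<open>i\<close> under \<open>c\<close> is an edge of
  colour \<open>i\<close> under \<open>c'\<close>, and as the edges are distinct and nonempty, \<open>c = c'\<close>.\<close>

definition partition_indeps :: "'i set \<Rightarrow> ('i \<Rightarrow> 'a set) \<Rightarrow> ('i \<Rightarrow> nat) \<Rightarrow> 'a set set" where
  "partition_indeps S X t = {I. I \<subseteq> (\<Union>h\<in>S. X h) \<and> (\<forall>h\<in>S. card (I \<inter> X h) \<le> t h)}"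

lemma card_eq_sum_card_Int:
  assumes "finite S" "disjoint_family_on X S" "J \<subseteq> (\<Union>h\<in>S. X h)" "finite J"
  shows "card J = (\<Sum>h\<in>S. card (J \<inter> X h))"
proof -
  have "J = (\<Union>h\<in>S. J \<inter> X h)" using assms(3) by blast
  also have "card \<dots> = (\<Sum>h\<in>S. card (J \<inter> X h))"
    using assms by (intro card_UN_disjoint') (auto simp: disjoint_family_on_def)
  finally show ?thesis .
qed

lemma partition_indeps_subset_block:
  assumes "disjoint_family_on X S" "a \<in> S" "J \<subseteq> X a" "card J \<le> t a"
  shows "J \<in> partition_indeps S X t"
proof -
  have "card (J \<inter> X h) \<le> t h" if "h \<in> S" for h
  proof (cases "h = a")
    case False
    then have "J \<inter> X h = {}" using assms that by (auto simp: disjoint_family_on_def)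
    then show ?thesis by simp
  qed (use assms in \<open>simp add: Int_absorb2\<close>)
  then show ?thesis
    using assms by (auto simp: partition_indeps_def)
qed

lemma partition_indeps_downward_closed:
  assumes "J \<in> partition_indeps S X t" "I \<subseteq> J" "finite J"
  shows "I \<in> partition_indeps S X t"
  using assms unfolding partition_indeps_def
  by (auto intro: le_trans[OF card_mono])

lemma partition_indeps_augment:
  assumes "finite S" "disjoint_family_on X S" "finite (\<Union>h\<in>S. X h)"
    and I: "I \<in> partition_indeps S X t" and J: "J \<in> partition_indeps S X t"
    and less: "card I < card J"
  shows "\<exists>x\<in>J - I. insert x I \<in> partition_indeps S X t"
proof -
  have fin: "finite I" "finite J"
    using I J assms(3) by (auto simp: partition_indeps_def intro: finite_subset)
  have "(\<Sum>h\<in>S. card (I \<inter> X h)) < (\<Sum>h\<in>S. card (J \<inter> X h))"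
    using less I J fin card_eq_sum_card_Int[OF assms(1,2)]
    by (simp add: partition_indeps_def)
  then obtain h where h: "h \<in> S" "card (I \<inter> X h) < card (J \<inter> X h)"
    by (meson not_less sum_mono)
  then have "\<not> J \<inter> X h \<subseteq> I \<inter> X h"
    using card_mono[of "I \<inter> X h" "J \<inter> X h"] fin by auto
  then obtain x where x: "x \<in> J" "x \<in> X h" "x \<notin> I" by blast
  have "card (insert x I \<inter> X g) \<le> t g" if g: "g \<in> S" for g
  proof (cases "g = h")
    case True
    then have "card (insert x I \<inter> X g) = Suc (card (I \<inter> X h))"
      using x fin by simp
    also have "\<dots> \<le> t h"
      using h J by (auto simp: partition_indeps_def intro: le_trans)
    finally show ?thesis using True by simp
  next
    case False
    then have "x \<notin> X g" using x g h assms(2) by (auto simp: disjoint_family_on_def)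
    then show ?thesis using I g by (auto simp: partition_indeps_def)
  qed
  then have "insert x I \<in> partition_indeps S X t"
    using I x h by (auto simp: partition_indeps_def)
  then show ?thesis using x by blast
qed

lemma matroid_on_partition_indeps:
  assumes "finite E" "finite S" "disjoint_family_on X S" "\<forall>h\<in>S. X h \<subseteq> E"
  shows "matroid_on E (E, partition_indeps S X t)"
proof -
  have U: "(\<Union>h\<in>S. X h) \<subseteq> E" using assms(4) by blast
  then have finU: "finite (\<Union>h\<in>S. X h)" using assms(1) finite_subset by blast
  show ?thesis
    unfolding matroid_on_def fst_conv snd_conv
  proof (intro conjI allI impI)
    show "partition_indeps S X t \<subseteq> Pow E" "{} \<in> partition_indeps S X t"
      using U by (auto simp: partition_indeps_def)
  next
    fix I J assume J: "J \<in> partition_indeps S X t" and "I \<subseteq> J"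
    moreover have "finite J"
      using J finU by (auto simp: partition_indeps_def intro: finite_subset)
    ultimately show "I \<in> partition_indeps S X t"
      by (rule partition_indeps_downward_closed)
  qed (use assms(1) partition_indeps_augment[OF assms(2,3) finU] in auto)
qed

lemma partition_indeps_card_le:
  assumes "finite S" "disjoint_family_on X S" "finite (\<Union>h\<in>S. X h)"
    and J: "J \<in> partition_indeps S X t" "J \<subseteq> A"
  shows "card J \<le> (\<Sum>h\<in>S. min (t h) (card (A \<inter> X h)))"
proof -
  have "J \<subseteq> (\<Union>h\<in>S. X h)" using J by (simp add: partition_indeps_def)
  then have "card J = (\<Sum>h\<in>S. card (J \<inter> X h))"
    using assms(3) by (intro card_eq_sum_card_Int[OF assms(1,2)]) (auto intro: finite_subset)
  also have "\<dots> \<le> (\<Sum>h\<in>S. min (t h) (card (A \<inter> X h)))"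
  proof (rule sum_mono)
    fix h assume h: "h \<in> S"
    then have "card (J \<inter> X h) \<le> card (A \<inter> X h)"
      using J assms(3) by (intro card_mono) (auto intro: finite_subset)
    then show "card (J \<inter> X h) \<le> min (t h) (card (A \<inter> X h))"
      using J h by (simp add: partition_indeps_def)
  qed
  finally show ?thesis .
qed

lemma partition_indeps_card_attained:
  assumes "finite S" "disjoint_family_on X S" "finite (\<Union>h\<in>S. X h)"
  obtains J where "J \<in> partition_indeps S X t" "J \<subseteq> A"
    "card J = (\<Sum>h\<in>S. min (t h) (card (A \<inter> X h)))"
proof -
  have "\<forall>h\<in>S. \<exists>T. T \<subseteq> A \<inter> X h \<and> card T = min (t h) (card (A \<inter> X h))"
    by (meson min.cobounded2 obtain_subset_with_card_n)
  then obtain f where f: "\<And>h. h \<in> S \<Longrightarrow> f h \<subseteq> A \<inter> X h"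
    "\<And>h. h \<in> S \<Longrightarrow> card (f h) = min (t h) (card (A \<inter> X h))"
    by metis
  define J where "J = (\<Union>h\<in>S. f h)"
  have fin: "finite (f h)" if "h \<in> S" for h
  proof -
    have "f h \<subseteq> (\<Union>h\<in>S. X h)" using f(1)[OF that] that by blast
    then show ?thesis using assms(3) by (rule finite_subset)
  qed
  have "disjoint_family_on f S"
    using assms(2) f(1) by (fastforce simp: disjoint_family_on_def)
  then have "card J = (\<Sum>h\<in>S. card (f h))"
    unfolding J_def using assms(1) fin by (intro card_UN_disjoint')
  also have "\<dots> = (\<Sum>h\<in>S. min (t h) (card (A \<inter> X h)))"
    using f(2) by simp
  finally have card: "card J = \<dots>" .
  have "J \<inter> X g = f g" if g: "g \<in> S" for g
  proof
    show "J \<inter> X g \<subseteq> f g"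
    proof
      fix z assume "z \<in> J \<inter> X g"
      then obtain h where h: "h \<in> S" "z \<in> f h" "z \<in> X g" unfolding J_def by blast
      then have "h = g" using f(1)[OF h(1)] disjoint_family_onD[OF assms(2) h(1) g] by blast
      then show "z \<in> f g" using h by simp
    qed
  qed (use f(1) g in \<open>auto simp: J_def\<close>)
  then have "J \<in> partition_indeps S X t"
    using f unfolding partition_indeps_def J_def by auto
  moreover have "J \<subseteq> A" using f(1) unfolding J_def by blast
  ultimately show ?thesis using card that by blast
qed

lemma mrank_partition_indeps:
  assumes "finite S" "disjoint_family_on X S" "finite (\<Union>h\<in>S. X h)"
  shows "mrank (E, partition_indeps S X t) A = (\<Sum>h\<in>S. min (t h) (card (A \<inter> X h)))"
  unfolding mrank_def snd_conv
proof (rule Max_eqI)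
  show "finite (card ` {J. J \<subseteq> A \<and> J \<in> partition_indeps S X t})"
    by (rule finite_imageI, rule finite_subset[of _ "Pow (\<Union>h\<in>S. X h)"])
      (use assms(3) in \<open>auto simp: partition_indeps_def\<close>)
  show "m \<le> (\<Sum>h\<in>S. min (t h) (card (A \<inter> X h)))"
    if "m \<in> card ` {J. J \<subseteq> A \<and> J \<in> partition_indeps S X t}" for m
    using that partition_indeps_card_le[OF assms] by auto
  obtain J where J: "J \<in> partition_indeps S X t" "J \<subseteq> A"
    "card J = (\<Sum>h\<in>S. min (t h) (card (A \<inter> X h)))"
    using partition_indeps_card_attained[OF assms] .
  then show "(\<Sum>h\<in>S. min (t h) (card (A \<inter> X h))) \<in> card ` {J. J \<subseteq> A \<and> J \<in> partition_indeps S X t}"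
    by (intro image_eqI[of _ _ J]) auto
qed

lemma dsum_uniform_eq_partition:
  assumes "finite E" "\<forall>h\<in>S. X h \<subseteq> E"
  shows "dsum2 (dsum S (\<lambda>h. uniform (t h) (X h))) (uniform 0 (E - (\<Union>h\<in>S. X h)))
    = (E, partition_indeps S X t)"
proof -
  let ?U = "\<Union>h\<in>S. X h"
  have UE: "?U \<union> (E - ?U) = E" using assms(2) by blast
  have "I \<inter> ?U \<inter> X h = I \<inter> X h" if "h \<in> S" for I h
    using that by blast
  moreover have "card (I \<inter> (E - ?U)) = 0 \<longleftrightarrow> I \<inter> (E - ?U) = {}" for I
    using assms(1) by simp
  ultimately have key: "I \<subseteq> E \<and> I \<inter> ?U \<in> snd (dsum S (\<lambda>h. uniform (t h) (X h)))
      \<and> I \<inter> (E - ?U) \<in> snd (uniform 0 (E - ?U)) \<longleftrightarrow> I \<in> partition_indeps S X t" for I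
    using UE by (auto simp: dsum_def uniform_def partition_indeps_def)
  have fst: "fst (dsum S (\<lambda>h. uniform (t h) (X h))) = ?U" "fst (uniform 0 (E - ?U)) = E - ?U"
    by (simp_all add: dsum_def uniform_def)
  show ?thesis
    unfolding dsum2_def fst UE key by simp
qed

lemma dsum_singleton_uniform: "dsum {h} (\<lambda>h. uniform (t h) (X h)) = uniform (t h) (X h)"
  by (auto simp: dsum_def uniform_def Int_absorb2)

definition separated :: "'a set set \<Rightarrow> 'a \<Rightarrow> 'a \<Rightarrow> bool" where
  "separated F x y \<longleftrightarrow>
     (\<forall>I. x \<notin> I \<longrightarrow> y \<notin> I \<longrightarrow> insert x I \<in> F \<longrightarrow> insert y I \<in> F \<longrightarrow> insert x (insert y I) \<in> F)"

lemma separated_partition_indeps: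
  assumes "disjoint_family_on X S" "a \<in> S" "b \<in> S" "a \<noteq> b" "x \<in> X a" "y \<in> X b"
  shows "separated (partition_indeps S X t) x y"
  unfolding separated_def
proof (intro allI impI)
  fix I assume Ix: "insert x I \<in> partition_indeps S X t" and Iy: "insert y I \<in> partition_indeps S X t"
  have "card (insert x (insert y I) \<inter> X g) \<le> t g" if g: "g \<in> S" for g
  proof (cases "g = b")
    case True
    then have "x \<notin> X g" using assms by (auto simp: disjoint_family_on_def)
    then have "insert x (insert y I) \<inter> X g = insert y I \<inter> X g" by auto
    then show ?thesis using Iy g by (simp add: partition_indeps_def)
  next
    case False
    then have "y \<notin> X g" using assms g by (auto simp: disjoint_family_on_def)
    then have "insert x (insert y I) \<inter> X g = insert x I \<inter> X g" by auto
    then show ?thesis using Ix g by (simp add: partition_indeps_def)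
  qed
  then show "insert x (insert y I) \<in> partition_indeps S X t"
    using Ix Iy by (auto simp: partition_indeps_def)
qed

lemma not_separated_partition_indeps:
  assumes "disjoint_family_on X S" "a \<in> S" "x \<in> X a" "y \<in> X a" "x \<noteq> y" "finite (X a)"
    and "0 < t a" "t a < card (X a)"
  shows "\<not> separated (partition_indeps S X t) x y"
proof
  assume sep: "separated (partition_indeps S X t) x y"
  have "t a - 1 \<le> card (X a - {x, y})"
    using assms by (subst card_Diff_subset) auto
  then obtain I where I: "I \<subseteq> X a - {x, y}" "card I = t a - 1"
    by (rule obtain_subset_with_card_n)
  have fin: "finite I" using I assms(6) finite_subset by blast
  have xy: "x \<notin> I" "y \<notin> I" using I by auto
  have "insert x I \<in> partition_indeps S X t" "insert y I \<in> partition_indeps S X t"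
    using I fin xy assms by (auto intro!: partition_indeps_subset_block)
  then have "insert x (insert y I) \<in> partition_indeps S X t"
    using sep I unfolding separated_def by blast
  then have "card (insert x (insert y I) \<inter> X a) \<le> t a"
    using assms(2) by (simp add: partition_indeps_def)
  moreover have "insert x (insert y I) \<inter> X a = insert x (insert y I)"
    using I assms by auto
  moreover have "card (insert x (insert y I)) = t a + 1"
    using I fin xy assms by auto
  ultimately show False by simp
qed

lemma partition_indeps_block_subset:
  assumes eq: "partition_indeps S X t = partition_indeps S' X t"
    and "disjoint_family_on X S" "disjoint_family_on X S'"
    and "h \<in> S" "h' \<in> S'" "x \<in> X h" "x \<in> X h'" "finite (X h)"
    and t: "t h = 1 \<or> (0 < t h \<and> t h < card (X h))"
  shows "X h \<subseteq> X h'"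
proof
  fix y assume y: "y \<in> X h"
  show "y \<in> X h'"
  proof (rule ccontr)
    assume y': "y \<notin> X h'"
    then have "x \<noteq> y" using assms by auto
    then have "2 \<le> card (X h)"
      using card_mono[of "X h" "{x, y}"] assms y by auto
    then have th: "0 < t h" "t h < card (X h)" using t by auto
    have "{y} \<in> partition_indeps S' X t"
      using th assms y by (auto simp flip: eq intro: partition_indeps_subset_block)
    then obtain h'' where "h'' \<in> S'" "y \<in> X h''" by (auto simp: partition_indeps_def)
    then have "separated (partition_indeps S X t) x y"
      unfolding eq using y' assms by (intro separated_partition_indeps[of X S' h' h'']) auto
    moreover have "\<not> separated (partition_indeps S X t) x y"
      using \<open>x \<noteq> y\<close> th assms y by (intro not_separated_partition_indeps) auto
    ultimately show False by contradiction
  qed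
qed

lemma proper_coloring_class_disjoint:
  assumes "c \<in> proper_colorings n X k"
  shows "disjoint_family_on X {h\<in>{1..n}. c h = i}"
  using assms unfolding disjoint_family_on_def proper_colorings_def line_adj_def by fastforce

lemma multi_hypergraph_finite_edge:
  assumes "multi_hypergraph E n X" "h \<in> {1..n}"
  shows "finite (X h)"
  using assms unfolding multi_hypergraph_def by (blast intro: finite_subset)

lemma phi_eq_partition:
  assumes "multi_hypergraph E n X" "i \<in> {1..k}"
  shows "phi E n X t k c i = (E, partition_indeps {h\<in>{1..n}. c h = i} X t)"
  using assms dsum_uniform_eq_partition[of E "{h\<in>{1..n}. c h = i}" X t]
  by (simp add: phi_def multi_hypergraph_def)

lemma rho_H_eq_sum_min:
  assumes "multi_hypergraph E n X"
  shows "rho_H E n X t A = (\<Sum>h=1..n. int (min (t h) (card (A \<inter> X h))))"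
  unfolding rho_H_def
proof (rule sum.cong[OF refl])
  fix h assume h: "h \<in> {1..n}"
  then have "X h \<subseteq> E" "finite E" using assms by (auto simp: multi_hypergraph_def)
  then have "dsum2 (uniform (t h) (X h)) (uniform 0 (E - X h)) = (E, partition_indeps {h} X t)"
    using dsum_uniform_eq_partition[of E "{h}" X t] by (simp add: dsum_singleton_uniform)
  moreover have "mrank (E, partition_indeps {h} X t) A = min (t h) (card (A \<inter> X h))"
    using multi_hypergraph_finite_edge[OF assms h]
    by (subst mrank_partition_indeps) (auto simp: disjoint_family_on_def)
  ultimately show "int (mrank (dsum2 (uniform (t h) (X h)) (uniform 0 (E - X h))) A)
      = int (min (t h) (card (A \<inter> X h)))" by simp
qed

lemma phi_in_Delta:
  assumes mh: "multi_hypergraph E n X" and c: "c \<in> proper_colorings n X k"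
  shows "phi E n X t k c \<in> Delta E (rho_H E n X t) k"
proof -
  have fE: "finite E" and XE: "\<forall>h\<in>{1..n}. X h \<subseteq> E"
    using mh by (auto simp: multi_hypergraph_def)
  have finU: "finite (\<Union>h\<in>{h\<in>{1..n}. c h = i}. X h)" for i
    using XE by (intro finite_subset[OF _ fE]) blast
  have "matroid_on E (phi E n X t k c i)" if "i \<in> {1..k}" for i
    unfolding phi_eq_partition[OF mh that]
    using fE XE proper_coloring_class_disjoint[OF c] by (intro matroid_on_partition_indeps) auto
  moreover have "rho_H E n X t A = (\<Sum>i=1..k. int (mrank (phi E n X t k c i) A))" for A
  proof -
    have "(\<Sum>i=1..k. int (mrank (phi E n X t k c i) A))
        = (\<Sum>i=1..k. \<Sum>h\<in>{h\<in>{1..n}. c h = i}. int (min (t h) (card (A \<inter> X h))))"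
      using proper_coloring_class_disjoint[OF c] finU
      by (intro sum.cong) (simp_all add: phi_eq_partition[OF mh] mrank_partition_indeps)
    also have "\<dots> = (\<Sum>h=1..n. int (min (t h) (card (A \<inter> X h))))"
      using c by (intro sum.group) (auto simp: proper_colorings_def)
    finally show ?thesis by (simp add: rho_H_eq_sum_min[OF mh])
  qed
  ultimately show ?thesis
    unfolding Delta_def by (simp add: phi_def)
qed

lemma chi_line_colorable: "chi_line n X \<ge> 1 \<and> proper_colorings n X (chi_line n X) \<noteq> {}"
proof -
  have "(\<lambda>h\<in>{1..n}. h) \<in> proper_colorings n X (max n 1)"
    by (auto simp: proper_colorings_def line_adj_def)
  then have "1 \<le> max n 1 \<and> proper_colorings n X (max n 1) \<noteq> {}" by auto
  then show ?thesis
    unfolding chi_line_def by (rule LeastI)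
qed

lemma chi_poly_le:
  assumes "k \<ge> 1" "Delta E \<rho> k \<noteq> {}"
  shows "chi_poly E \<rho> \<le> enat k"
  using assms by (auto simp: chi_poly_def intro: Least_le)

lemma inj_on_phi:
  assumes "hypergraph E n X" "\<forall>i\<in>{1..n}. t i = 1 \<or> (0 < t i \<and> t i < card (X i))"
  shows "inj_on (phi E n X t k) (proper_colorings n X k)"
proof (rule inj_onI)
  have mh: "multi_hypergraph E n X" and injX: "inj_on X {1..n}"
    and ne: "\<And>h. h \<in> {1..n} \<Longrightarrow> X h \<noteq> {}"
    using assms(1) by (auto simp: hypergraph_def)
  note fX = multi_hypergraph_finite_edge[OF mh]
  fix c c' assume c: "c \<in> proper_colorings n X k" and c': "c' \<in> proper_colorings n X k"
    and eq: "phi E n X t k c = phi E n X t k c'"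
  have "c h = c' h" if h: "h \<in> {1..n}" for h
  proof -
    define i where "i = c h"
    have "i \<in> {1..k}" using c h by (auto simp: i_def proper_colorings_def)
    then have indeps: "partition_indeps {h\<in>{1..n}. c h = i} X t = partition_indeps {h\<in>{1..n}. c' h = i} X t"
      using fun_cong[OF eq, of i] by (simp add: phi_eq_partition[OF mh])
    obtain x where x: "x \<in> X h" using ne[OF h] by blast
    have "1 \<le> t h" using assms(2) h by fastforce
    have "{x} \<in> partition_indeps {h\<in>{1..n}. c h = i} X t"
      using \<open>1 \<le> t h\<close> h x proper_coloring_class_disjoint[OF c]
      by (intro partition_indeps_subset_block[of _ _ h]) (auto simp: i_def)
    then obtain h' where h': "h' \<in> {1..n}" "c' h' = i" "x \<in> X h'"
      unfolding indeps by (auto simp: partition_indeps_def)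
    have "X h \<subseteq> X h'"
      using proper_coloring_class_disjoint[OF c] proper_coloring_class_disjoint[OF c']
        h h' x fX assms(2)
      by (intro partition_indeps_block_subset[OF indeps, of h h' x]) (auto simp: i_def)
    moreover have "X h' \<subseteq> X h"
      using proper_coloring_class_disjoint[OF c] proper_coloring_class_disjoint[OF c']
        h h' x fX assms(2)
      by (intro partition_indeps_block_subset[OF indeps[symmetric], of h' h x]) (auto simp: i_def)
    ultimately have "h' = h" using injX h h' by (auto dest: inj_onD)
    then show ?thesis using h' by (simp add: i_def)
  qed
  then show "c = c'"
    using c c' unfolding proper_colorings_def by (blast intro: PiE_ext)
qed

theorem lemma2p8:
  fixes E :: "'a set" and n :: nat and X :: "nat \<Rightarrow> 'a set" and t :: "nat \<Rightarrow> nat"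
  assumes "multi_hypergraph E n X"
    and "\<forall>i\<in>{1..n}. t i \<le> card (X i)"
  shows "(\<forall>k\<ge>1. \<forall>c\<in>proper_colorings n X k. phi E n X t k c \<in> Delta E (rho_H E n X t) k)
     \<and> chi_poly E (rho_H E n X t) \<le> enat (chi_line n X)
     \<and> ((hypergraph E n X \<and> (\<forall>i\<in>{1..n}. t i = 1 \<or> (0 < t i \<and> t i < card (X i))))
         \<longrightarrow> (\<forall>k\<ge>1. inj_on (phi E n X t k) (proper_colorings n X k)))"
proof -
  obtain c where "c \<in> proper_colorings n X (chi_line n X)"
    using chi_line_colorable by blast
  then have "phi E n X t (chi_line n X) c \<in> Delta E (rho_H E n X t) (chi_line n X)"
    by (rule phi_in_Delta[OF assms(1)])
  then have "chi_poly E (rho_H E n X t) \<le> enat (chi_line n X)"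
    using chi_line_colorable by (intro chi_poly_le) auto
  then show ?thesis
    using phi_in_Delta[OF assms(1)] inj_on_phi by blast
qed

end
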